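(* Let $N\ge1$, $K>0$, $r_i>0$, let $(\mu_{ij})$ be a nonnegative, symmetric, irreducible $N\times N$ matrix, and let $\Psi_1,\dots,\Psi_N:\mathbb{R}^N\to\mathbb{R}$ be locally Lipschitz with $\Psi_i(0)=0$, monotone increasing for the componentwise order, and such that for each $i$ there exist positive $R_i,k_i,c_i$ with $c_i(\sum_jv_j)^{k_i}\le\Psi_i(v)$ for all $v\in[0,\infty)^N$ with $\sum_j|v_j|\ge R_i$. Let $v(t)$ be a solution of the Cauchy problem $$\frac{dv_i}{dt}=v_i\left[r_i-\frac{1}{K}\Psi_i(v)\right]+\sum_{j=1}^N\mu_{ij}(v_j-v_i),\qquad i=1,\dots,N,$$ with nonnegative initial datum $v(0)$. Then there exist two constants $C_0,C_1$ and a vector $v_p$ with all components positive such that $v(t)\le C_0e^{C_1t}v_p$ componentwise for all $t$ in the interval of existence. *)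

theory Defs
  imports "HOL-Analysis.Analysis"
begin

definition irreducible_matrix :: "real^'n^'n \<Rightarrow> bool" where
  "irreducible_matrix m \<longleftrightarrow>
     (\<forall>I :: 'n set. I \<noteq> {} \<and> I \<noteq> UNIV \<longrightarrow> (\<exists>i\<in>I. \<exists>j. j \<notin> I \<and> m $ i $ j \<noteq> 0))"

definition locally_lipschitz :: "('a::metric_space \<Rightarrow> 'b::metric_space) \<Rightarrow> bool" where
  "locally_lipschitz f \<longleftrightarrow> (\<forall>x. \<exists>e>0. \<exists>L. L-lipschitz_on (ball x e) f)"

definition comp_mono :: "(real^'n \<Rightarrow> real) \<Rightarrow> bool" where
  "comp_mono f \<longleftrightarrow> (\<forall>u w. (\<forall>j. u $ j \<le> w $ j) \<longrightarrow> f u \<le> f w)"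

end

theory Submission imports Defs begin

text \<open>Finitely many functions that start below the barrier \<open>B e\<^sup>c\<^sup>t\<close> and, whenever one of them
  touches it while the others are still below, grow strictly slower than the barrier, stay
  below it.  Applied to \<open>v\<close> with \<open>c = 1 + \<Sum>\<^sub>i \<bar>r\<^sub>i\<bar>\<close> this gives the bound with
  \<open>v\<^sub>p = (1,\<dots>,1)\<close>: at a maximal component the migration term is nonpositive and, as the
  solution stays nonnegative and \<open>\<Psi>\<^sub>i\<close> is monotone with \<open>\<Psi>\<^sub>i(0) = 0\<close>, the reaction term is at
  most \<open>r\<^sub>i v\<^sub>i\<close>.  Nonnegativity is the same argument for \<open>-v\<close> with arbitrarily small \<open>B\<close>:
  near \<open>0\<close> local Lipschitz continuity bounds \<open>\<Psi>\<^sub>i\<close> linearly, and at a minimal component the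
  migration term is nonnegative.\<close>

lemma stays_negative_if_decreasing_at_zeros:
  fixes h h' :: "'i::finite \<Rightarrow> real \<Rightarrow> real"
  assumes "0 \<le> T"
    and der: "\<And>i t. t \<in> {0..T} \<Longrightarrow> (h i has_real_derivative h' i t) (at t within {0..T})"
    and init: "\<And>i. h i 0 < 0"
    and at_zero: "\<And>i t. t \<in> {0<..T} \<Longrightarrow> (\<forall>j. h j t \<le> 0) \<Longrightarrow> h i t = 0 \<Longrightarrow> h' i t < 0"
  shows "h i0 T < 0"
proof (rule ccontr)
  assume "\<not> h i0 T < 0"
  have cont: "continuous_on {0..T} (h i)" for i
    by (rule DERIV_continuous_on[OF der])
  define S where "S = (\<Union>i. {0..T} \<inter> h i -` {0..})"
  have "closed S" unfolding S_def
    by (intro closed_Union finite_imageI) (auto intro: continuous_closed_preimage[OF cont])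
  moreover have "T \<in> S" using \<open>\<not> h i0 T < 0\<close> \<open>0 \<le> T\<close> unfolding S_def by (auto intro!: exI[of _ i0])
  moreover have bdd: "bdd_below S" unfolding S_def by (auto intro!: bdd_belowI[of _ 0])
  ultimately have "Inf S \<in> S" using closed_contains_Inf by blast
  define ts where "ts = Inf S"
  obtain i where ts: "ts \<in> {0..T}" "0 \<le> h i ts"
    using \<open>Inf S \<in> S\<close> unfolding S_def ts_def by auto
  have tspos: "0 < ts" using ts init[of i] by (metis atLeastAtMost_iff le_less not_le)
  have before: "h j s < 0" if "s \<in> {0..<ts}" for j s
  proof (rule ccontr)
    assume "\<not> h j s < 0"
    hence "s \<in> S" using that ts unfolding S_def by (auto intro!: exI[of _ j])
    hence "ts \<le> s" unfolding ts_def using bdd by (simp add: cInf_lower)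
    thus False using that by auto
  qed
  have at_ts: "h j ts \<le> 0" for j
  proof -
    have "continuous_on {0..ts} (h j)" using cont by (rule continuous_on_subset) (use ts in auto)
    hence "(h j \<longlongrightarrow> h j ts) (at ts within {0..ts})"
      using tspos unfolding continuous_on_def by simp
    hence "(h j \<longlongrightarrow> h j ts) (at_left ts)" by (simp add: at_within_Icc_at_left[OF tspos])
    moreover have "\<forall>\<^sub>F s in at_left ts. h j s \<le> 0"
      using eventually_at_left_real[OF tspos] by eventually_elim (simp add: before less_imp_le)
    ultimately show ?thesis by (rule tendsto_upperbound) simp
  qed
  have "h i ts = 0" using at_ts[of i] ts by simp
  moreover have "h' i ts < 0" using at_zero[of ts i] at_ts ts tspos \<open>h i ts = 0\<close> by simp
  ultimately obtain d where "d > 0"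
    and dec: "\<And>k. k > 0 \<Longrightarrow> ts - k \<in> {0..T} \<Longrightarrow> k < d \<Longrightarrow> 0 < h i (ts - k)"
    using has_real_derivative_neg_dec_left[OF der[OF ts(1)]] by metis
  define k where "k = min d ts / 2"
  have "0 < h i (ts - k)" using \<open>d > 0\<close> ts tspos unfolding k_def by (intro dec) auto
  moreover have "h i (ts - k) < 0" using \<open>d > 0\<close> tspos unfolding k_def by (intro before) auto
  ultimately show False by simp
qed

lemma below_exp_barrier:
  fixes u u' :: "'i::finite \<Rightarrow> real \<Rightarrow> real"
  assumes "0 \<le> T"
    and der: "\<And>i t. t \<in> {0..T} \<Longrightarrow> (u i has_real_derivative u' i t) (at t within {0..T})"
    and init: "\<And>i. u i 0 < B"
    and at_barrier: "\<And>i t. t \<in> {0<..T} \<Longrightarrow> (\<forall>j. u j t \<le> B * exp (c * t)) \<Longrightarrow>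
                      u i t = B * exp (c * t) \<Longrightarrow> u' i t < c * (B * exp (c * t))"
  shows "u i T < B * exp (c * T)"
proof -
  have "u i T - B * exp (c * T) < 0"
  proof (rule stays_negative_if_decreasing_at_zeros[where h = "\<lambda>i t. u i t - B * exp (c * t)"
        and h' = "\<lambda>i t. u' i t - B * (exp (c * t) * c)"])
    show "((\<lambda>t. u i t - B * exp (c * t)) has_real_derivative u' i t - B * (exp (c * t) * c))
           (at t within {0..T})" if "t \<in> {0..T}" for i t
      by (auto intro!: derivative_eq_intros der that)
    show "u i 0 - B * exp (c * 0) < 0" for i using init[of i] by simp
    show "u' i t - B * (exp (c * t) * c) < 0"
      if "t \<in> {0<..T}" "\<forall>j. u j t - B * exp (c * t) \<le> 0" "u i t - B * exp (c * t) = 0" for i t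
      using at_barrier[of t i] that by (simp add: algebra_simps)
  qed fact
  thus ?thesis by simp
qed

lemma locally_lipschitz_bound_on_line:
  fixes f :: "'a::real_normed_vector \<Rightarrow> real"
  assumes "locally_lipschitz f" "f 0 = 0"
  obtains E L where "E > 0" "L \<ge> 0" "\<And>s. \<bar>s\<bar> < E \<Longrightarrow> \<bar>f (s *\<^sub>R a)\<bar> \<le> L * \<bar>s\<bar>"
proof -
  obtain e L where "e > 0" and lip: "L-lipschitz_on (ball 0 e) f"
    using assms(1) unfolding locally_lipschitz_def by blast
  show thesis
  proof
    show "e / (norm a + 1) > 0" using \<open>e > 0\<close> by (simp add: add_nonneg_pos)
    show "\<bar>L\<bar> * norm a \<ge> 0" by simp
    fix s assume "\<bar>s\<bar> < e / (norm a + 1)"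
    hence "\<bar>s\<bar> * (norm a + 1) < e" by (simp add: pos_less_divide_eq add_nonneg_pos)
    hence "norm (s *\<^sub>R a) < e" by (simp add: distrib_left)
    hence "\<bar>f (s *\<^sub>R a)\<bar> \<le> L * norm (s *\<^sub>R a)"
      using lipschitz_onD[OF lip, of "s *\<^sub>R a" 0] \<open>e > 0\<close> assms(2) by (simp add: dist_norm)
    also have "\<dots> \<le> \<bar>L\<bar> * norm (s *\<^sub>R a)" by (simp add: mult_right_mono)
    also have "\<dots> = (\<bar>L\<bar> * norm a) * \<bar>s\<bar>" by simp
    finally show "\<bar>f (s *\<^sub>R a)\<bar> \<le> (\<bar>L\<bar> * norm a) * \<bar>s\<bar>" .
  qed
qed

lemma locally_lipschitz_family_bound_on_line:
  fixes f :: "'i::finite \<Rightarrow> 'a::real_normed_vector \<Rightarrow> real"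
  assumes "\<And>i. locally_lipschitz (f i)" "\<And>i. f i 0 = 0"
  obtains E L where "E > 0" "L \<ge> 0" "\<And>i s. \<bar>s\<bar> < E \<Longrightarrow> \<bar>f i (s *\<^sub>R a)\<bar> \<le> L * \<bar>s\<bar>"
proof -
  have "\<forall>i. \<exists>E L. E > 0 \<and> L \<ge> 0 \<and> (\<forall>s. \<bar>s\<bar> < E \<longrightarrow> \<bar>f i (s *\<^sub>R a)\<bar> \<le> L * \<bar>s\<bar>)"
    by (metis locally_lipschitz_bound_on_line assms)
  then obtain E L where E: "\<And>i. E i > 0" and L_nonneg: "\<And>i. L i \<ge> 0"
    and L: "\<And>i s. \<bar>s\<bar> < E i \<Longrightarrow> \<bar>f i (s *\<^sub>R a)\<bar> \<le> L i * \<bar>s\<bar>"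
    by metis
  show thesis
  proof
    show "Min (range E) > 0" using E by simp
    show "Max (range L) \<ge> 0" using L_nonneg by (auto simp: Max_ge_iff)
    fix i s assume "\<bar>s\<bar> < Min (range E)"
    hence "\<bar>f i (s *\<^sub>R a)\<bar> \<le> L i * \<bar>s\<bar>" by (intro L) (simp add: order.strict_trans2)
    also have "\<dots> \<le> Max (range L) * \<bar>s\<bar>" by (simp add: mult_right_mono)
    finally show "\<bar>f i (s *\<^sub>R a)\<bar> \<le> Max (range L) * \<bar>s\<bar>" .
  qed
qed

lemma vec_nth_le_sum_abs: "(x :: real^'n) $ i \<le> (\<Sum>j\<in>UNIV. \<bar>x $ j\<bar>)"
  using member_le_sum[of i UNIV "\<lambda>j. \<bar>x $ j\<bar>"] abs_ge_self order_trans by fastforce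

definition migration_field ::
    "real \<Rightarrow> real^'n \<Rightarrow> real^'n^'n \<Rightarrow> ('n \<Rightarrow> real^'n \<Rightarrow> real) \<Rightarrow> real^'n \<Rightarrow> real^'n" where
  "migration_field K r \<mu> \<Psi> w =
     (\<chi> i. w $ i * (r $ i - \<Psi> i w / K) + (\<Sum>j\<in>UNIV. \<mu> $ i $ j * (w $ j - w $ i)))"

lemma migration_field_at_minimal_component:
  assumes "K > 0" and "\<forall>j. \<mu> $ i $ j \<ge> 0" and "comp_mono (\<Psi> i)"
    and "-1 \<le> m" "m < 0" and Psi_bound: "\<bar>\<Psi> i (m *\<^sub>R 1)\<bar> \<le> L * \<bar>m\<bar>"
    and "\<forall>j. m \<le> w $ j" "w $ i = m"
  shows "(r $ i + L / K) * m \<le> migration_field K r \<mu> \<Psi> w $ i"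
proof -
  have "\<Psi> i (m *\<^sub>R 1) \<le> \<Psi> i w"
    using \<open>comp_mono (\<Psi> i)\<close> \<open>\<forall>j. m \<le> w $ j\<close> unfolding comp_mono_def by simp
  moreover have "L * m \<le> \<Psi> i (m *\<^sub>R 1)" using Psi_bound \<open>m < 0\<close> by (simp add: abs_le_iff)
  ultimately have "L * m \<le> \<Psi> i w" by linarith
  hence "- m * (L * m) \<le> - m * \<Psi> i w" using \<open>m < 0\<close> by (intro mult_left_mono) auto
  moreover have "0 \<le> L * \<bar>m\<bar>" using Psi_bound abs_ge_zero order_trans by blast
  hence "L \<ge> 0" using \<open>m < 0\<close> by (simp add: zero_le_mult_iff mult_le_0_iff)
  hence "L * m * (1 + m) \<le> 0"
    using \<open>-1 \<le> m\<close> \<open>m < 0\<close> by (intro mult_nonpos_nonneg mult_nonneg_nonpos) auto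
  ultimately have "L * m \<le> - m * \<Psi> i w" by (simp add: algebra_simps)
  hence "L * m / K \<le> - m * \<Psi> i w / K" using \<open>K > 0\<close> by (intro divide_right_mono) auto
  moreover have "0 \<le> (\<Sum>j\<in>UNIV. \<mu> $ i $ j * (w $ j - w $ i))"
    using assms(2,7,8) by (simp add: sum_nonneg)
  ultimately show ?thesis
    unfolding migration_field_def using \<open>w $ i = m\<close> by (simp add: algebra_simps add_divide_distrib)
qed

lemma migration_field_at_maximal_component:
  assumes "K > 0" and "\<forall>j. \<mu> $ i $ j \<ge> 0" and "\<Psi> i w \<ge> 0"
    and "0 \<le> b" and "\<forall>j. w $ j \<le> b" "w $ i = b"
  shows "migration_field K r \<mu> \<Psi> w $ i \<le> r $ i * b"
proof -
  have "(\<Sum>j\<in>UNIV. \<mu> $ i $ j * (w $ j - w $ i)) \<le> 0"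
    using assms(2,5,6) by (intro sum_nonpos mult_nonneg_nonpos) auto
  moreover have "0 \<le> b * \<Psi> i w / K" using assms(1,3,4) by simp
  ultimately show ?thesis
    unfolding migration_field_def using \<open>w $ i = b\<close> by (simp add: algebra_simps)
qed

locale migration_solution =
  fixes K :: real and r :: "real^'n" and \<mu> :: "real^'n^'n" and \<Psi> :: "'n \<Rightarrow> real^'n \<Rightarrow> real"
    and J :: "real set" and v :: "real \<Rightarrow> real^'n"
  assumes K_pos: "K > 0"
    and mu_nonneg: "\<And>i j. \<mu> $ i $ j \<ge> 0"
    and Psi_lip: "\<And>i. locally_lipschitz (\<Psi> i)"
    and Psi_zero: "\<And>i. \<Psi> i 0 = 0"
    and Psi_mono: "\<And>i. comp_mono (\<Psi> i)"
    and J_interval: "is_interval J" and J_0: "0 \<in> J" and J_nonneg: "J \<subseteq> {0..}"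
    and ode: "\<And>t. t \<in> J \<Longrightarrow> (v has_vector_derivative migration_field K r \<mu> \<Psi> (v t)) (at t within J)"
    and init_nonneg: "\<And>i. v 0 $ i \<ge> 0"
begin

lemma Icc_subset_interval:
  assumes "T \<in> J" shows "{0..T} \<subseteq> J"
  using J_interval[unfolded is_interval_1, rule_format, OF J_0 assms] by auto

lemma component_has_derivative:
  assumes "T \<in> J" "t \<in> {0..T}"
  shows "((\<lambda>t. v t $ i) has_real_derivative migration_field K r \<mu> \<Psi> (v t) $ i) (at t within {0..T})"
proof -
  have "(v has_vector_derivative migration_field K r \<mu> \<Psi> (v t)) (at t within {0..T})"
    using Icc_subset_interval[OF \<open>T \<in> J\<close>] \<open>t \<in> {0..T}\<close>
    by (intro has_vector_derivative_within_subset[OF ode]) auto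
  from bounded_linear.has_vector_derivative[OF bounded_linear_vec_nth this]
  show ?thesis by (simp add: has_real_derivative_iff_has_vector_derivative)
qed

lemma solution_nonneg:
  assumes "T \<in> J"
  shows "0 \<le> v T $ i"
proof -
  obtain E L where "E > 0" "L \<ge> 0"
    and Psi_bound: "\<And>i s. \<bar>s\<bar> < E \<Longrightarrow> \<bar>\<Psi> i (s *\<^sub>R 1)\<bar> \<le> L * \<bar>s\<bar>"
    using locally_lipschitz_family_bound_on_line[where f = \<Psi> and a = 1, OF Psi_lip Psi_zero]
    by blast
  define c where "c = (\<Sum>i\<in>UNIV. \<bar>r $ i\<bar>) + L / K + 1"
  \<comment> \<open>barrier levels of size at most \<open>\<delta>\<close> lie in \<open>[-1, 0)\<close> and within the Lipschitz radius\<close>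
  define \<delta> where "\<delta> = min 1 (E / 2)"
  have "T \<ge> 0" using J_nonneg \<open>T \<in> J\<close> by auto
  have "c \<ge> 0" unfolding c_def using \<open>L \<ge> 0\<close> K_pos by (simp add: add_nonneg_nonneg sum_nonneg)
  have barrier: "- v T $ i < \<epsilon> * exp (c * T)" if "\<epsilon> > 0" "\<epsilon> * exp (c * T) \<le> \<delta>" for \<epsilon>
  proof (rule below_exp_barrier[where u = "\<lambda>i t. - v t $ i"
        and u' = "\<lambda>i t. - migration_field K r \<mu> \<Psi> (v t) $ i", OF \<open>T \<ge> 0\<close>])
    show "((\<lambda>t. - v t $ i) has_real_derivative - migration_field K r \<mu> \<Psi> (v t) $ i)
           (at t within {0..T})" if "t \<in> {0..T}" for i t
      using component_has_derivative[OF \<open>T \<in> J\<close> that] by (rule DERIV_minus)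
    show "- v 0 $ i < \<epsilon>" for i using init_nonneg[of i] \<open>\<epsilon> > 0\<close> by linarith
    fix j t assume t: "t \<in> {0<..T}" and above: "\<forall>k. - v t $ k \<le> \<epsilon> * exp (c * t)"
      and touch: "- v t $ j = \<epsilon> * exp (c * t)"
    define m where "m = - (\<epsilon> * exp (c * t))"
    have "m < 0" unfolding m_def using \<open>\<epsilon> > 0\<close> by simp
    have "\<epsilon> * exp (c * t) \<le> \<epsilon> * exp (c * T)"
      using t \<open>c \<ge> 0\<close> \<open>\<epsilon> > 0\<close> by (simp add: mult_left_mono)
    hence "-1 \<le> m" "\<bar>m\<bar> < E" using \<open>\<epsilon> * exp (c * T) \<le> \<delta>\<close> \<open>m < 0\<close> \<open>E > 0\<close>
      unfolding m_def \<delta>_def by auto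
    have "(r $ j + L / K) * m \<le> migration_field K r \<mu> \<Psi> (v t) $ j"
    proof (rule migration_field_at_minimal_component[OF K_pos _ Psi_mono \<open>-1 \<le> m\<close> \<open>m < 0\<close>
          Psi_bound[OF \<open>\<bar>m\<bar> < E\<close>]])
      show "\<forall>k. 0 \<le> \<mu> $ j $ k" using mu_nonneg by simp
      show "\<forall>k. m \<le> v t $ k" using above unfolding m_def by (simp add: minus_le_iff)
      show "v t $ j = m" using touch unfolding m_def by simp
    qed
    moreover have "c * m < (r $ j + L / K) * m"
      unfolding c_def using \<open>m < 0\<close> vec_nth_le_sum_abs[of r j] by simp
    ultimately show "- migration_field K r \<mu> \<Psi> (v t) $ j < c * (\<epsilon> * exp (c * t))"
      unfolding m_def by (simp add: algebra_simps)
  qed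
  show ?thesis
  proof (rule field_le_epsilon)
    fix x :: real assume "x > 0"
    have "\<delta> > 0" unfolding \<delta>_def using \<open>E > 0\<close> by simp
    hence "- v T $ i < min x \<delta>" using barrier[of "min x \<delta> / exp (c * T)"] \<open>x > 0\<close> by simp
    thus "0 \<le> v T $ i + x" by linarith
  qed
qed

lemma solution_exp_bound:
  assumes "T \<in> J"
  shows "v T $ i < ((\<Sum>j\<in>UNIV. \<bar>v 0 $ j\<bar>) + 1) * exp (((\<Sum>j\<in>UNIV. \<bar>r $ j\<bar>) + 1) * T)"
    (is "_ < ?B * exp (?c * T)")
proof (rule below_exp_barrier[where u' = "\<lambda>i t. migration_field K r \<mu> \<Psi> (v t) $ i"])
  show "0 \<le> T" using J_nonneg \<open>T \<in> J\<close> by auto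
  show "((\<lambda>t. v t $ i) has_real_derivative migration_field K r \<mu> \<Psi> (v t) $ i) (at t within {0..T})"
    if "t \<in> {0..T}" for i t
    using component_has_derivative[OF \<open>T \<in> J\<close> that] .
  show "v 0 $ i < ?B" for i using vec_nth_le_sum_abs[of "v 0" i] by simp
  fix j t assume t: "t \<in> {0<..T}" and below: "\<forall>k. v t $ k \<le> ?B * exp (?c * t)"
    and touch: "v t $ j = ?B * exp (?c * t)"
  have "t \<in> J" using Icc_subset_interval[OF \<open>T \<in> J\<close>] t by auto
  have "?B > 0" by (simp add: add_nonneg_pos sum_nonneg)
  have "0 \<le> \<Psi> j (v t)"
    using Psi_mono[of j] Psi_zero[of j] solution_nonneg[OF \<open>t \<in> J\<close>] unfolding comp_mono_def
    by (metis zero_index)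
  hence "migration_field K r \<mu> \<Psi> (v t) $ j \<le> r $ j * (?B * exp (?c * t))"
    using below touch \<open>?B > 0\<close> mu_nonneg
    by (intro migration_field_at_maximal_component[OF K_pos]) auto
  also have "\<dots> < ?c * (?B * exp (?c * t))"
    using \<open>?B > 0\<close> vec_nth_le_sum_abs[of r j] by (intro mult_strict_right_mono) auto
  finally show "migration_field K r \<mu> \<Psi> (v t) $ j < ?c * (?B * exp (?c * t))" .
qed

end

theorem lemma2p3:
  fixes K :: real and r :: "real^'n" and \<mu> :: "real^'n^'n"
    and \<Psi> :: "'n \<Rightarrow> real^'n \<Rightarrow> real"
    and v :: "real \<Rightarrow> real^'n" and J :: "real set"
  assumes K_pos: "K > 0"
    and r_pos: "\<forall>i. r $ i > 0"
    and mu_nonneg: "\<forall>i j. \<mu> $ i $ j \<ge> 0"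
    and mu_sym: "\<forall>i j. \<mu> $ i $ j = \<mu> $ j $ i"
    and mu_irred: "irreducible_matrix \<mu>"
    and Psi_lip: "\<forall>i. locally_lipschitz (\<Psi> i)"
    and Psi_zero: "\<forall>i. \<Psi> i 0 = 0"
    and Psi_mono: "\<forall>i. comp_mono (\<Psi> i)"
    and Psi_growth: "\<forall>i. \<exists>R k c. R > 0 \<and> k > 0 \<and> c > 0 \<and>
        (\<forall>w. (\<forall>j. w $ j \<ge> 0) \<and> (\<Sum>j\<in>UNIV. \<bar>w $ j\<bar>) \<ge> R
              \<longrightarrow> c * (\<Sum>j\<in>UNIV. w $ j) powr k \<le> \<Psi> i w)"
    and J_interval: "is_interval J" and J_0: "0 \<in> J" and J_nonneg: "J \<subseteq> {0..}"
    and ode: "\<forall>t\<in>J. (v has_vector_derivative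
        (\<chi> i. v t $ i * (r $ i - \<Psi> i (v t) / K)
               + (\<Sum>j\<in>UNIV. \<mu> $ i $ j * (v t $ j - v t $ i)))) (at t within J)"
    and init_nonneg: "\<forall>i. v 0 $ i \<ge> 0"
  shows "\<exists>C0 C1 (vp :: real^'n). (\<forall>i. vp $ i > 0) \<and>
           (\<forall>t\<in>J. \<forall>i. v t $ i \<le> C0 * exp (C1 * t) * vp $ i)"
proof -
  interpret migration_solution K r \<mu> \<Psi> J v
  proof
    show "(v has_vector_derivative migration_field K r \<mu> \<Psi> (v t)) (at t within J)" if "t \<in> J" for t
      using ode that unfolding migration_field_def by blast
  qed (use K_pos mu_nonneg Psi_lip Psi_zero Psi_mono J_interval J_0 J_nonneg init_nonneg in simp_all)
  have "\<forall>t\<in>J. \<forall>i. v t $ i \<le> ((\<Sum>j\<in>UNIV. \<bar>v 0 $ j\<bar>) + 1) *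
      exp (((\<Sum>j\<in>UNIV. \<bar>r $ j\<bar>) + 1) * t) * (1 :: real^'n) $ i"
    using solution_exp_bound by (simp add: less_imp_le)
  moreover have "\<forall>i. (1 :: real^'n) $ i > 0" by simp
  ultimately show ?thesis by blast
qed

end
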